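(* Consider the weighted stochastic block model: there are $r$ latent communities labelled $1,\ldots,r$; each node $i$ is independently assigned a latent community $Z_i$ with $\mathbb{P}(Z_i=z)=p_z>0$ for $z=1,\ldots,r$; each unordered pair of distinct nodes $i\neq j$ carries a real-valued edge weight $X_{i,j}=X_{j,i}$, where, conditional on the community indicators, the edge weights are independent and $X_{i,j}$ has distribution function $F_{z_1,z_2}(x)=\mathbb{P}(X_{i,j}\le x\mid Z_i=z_1,Z_j=z_2)$. Let $F_z(x):=\sum_{z'=1}^r F_{z,z'}(x)\,p_{z'}=\mathbb{P}(X_{i,j}\le x\mid Z_i=z)$. Suppose that the functions $F_1,\ldots,F_r$ are linearly independent. Then the weighted stochastic block model, i.e. the number of communities $r$, the community distribution $\boldsymbol{p}=(p_1,\ldots,p_r)'$, and the conditional distributions $F_{z_1,z_2}$, $1\le z_1,z_2\le r$, is nonparametrically identified from the distribution of the edge weights, up to relabeling of the latent communities.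
   Context: "Nonparametrically identified up to relabeling" means that any two weighted stochastic block models satisfying the assumptions and inducing the same joint distribution of observed edge weights have the same $r$ and have $(\boldsymbol{p},\{F_{z_1,z_2}\})$ equal up to a single permutation of the community labels, with no parametric restrictions imposed on the $F_{z_1,z_2}$. *)

theory Defs
  imports "HOL-Analysis.Analysis" "HOL-Library.FuncSet"
begin

definition is_cdf :: "(real \<Rightarrow> real) \<Rightarrow> bool" where
  "is_cdf F \<longleftrightarrow> mono F \<and> (\<forall>x. continuous (at_right x) F)
     \<and> (F \<longlongrightarrow> 0) at_bot \<and> (F \<longlongrightarrow> 1) at_top"

text \<open>A weighted stochastic block model with r communities labelled 1..r,
  community probabilities p z > 0 and conditional edge-weight distribution functions
  F z1 z2 (symmetric since X_ij = X_ji).\<close>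
definition wsbm :: "nat \<Rightarrow> (nat \<Rightarrow> real) \<Rightarrow> (nat \<Rightarrow> nat \<Rightarrow> real \<Rightarrow> real) \<Rightarrow> bool" where
  "wsbm r p F \<longleftrightarrow> r \<ge> 1 \<and> (\<forall>z\<in>{1..r}. p z > 0) \<and> (\<Sum>z=1..r. p z) = 1
     \<and> (\<forall>z1\<in>{1..r}. \<forall>z2\<in>{1..r}. is_cdf (F z1 z2) \<and> F z1 z2 = F z2 z1)"

definition marg_cdf :: "nat \<Rightarrow> (nat \<Rightarrow> real) \<Rightarrow> (nat \<Rightarrow> nat \<Rightarrow> real \<Rightarrow> real) \<Rightarrow> nat \<Rightarrow> real \<Rightarrow> real" where
  "marg_cdf r p F z x = (\<Sum>z'=1..r. F z z' x * p z')"

definition lin_indep_funs :: "nat \<Rightarrow> (nat \<Rightarrow> real \<Rightarrow> real) \<Rightarrow> bool" where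
  "lin_indep_funs r G \<longleftrightarrow>
     (\<forall>c :: nat \<Rightarrow> real. (\<forall>x. (\<Sum>z=1..r. c z * G z x) = 0) \<longrightarrow> (\<forall>z\<in>{1..r}. c z = 0))"

text \<open>Joint distribution function of the observed edge weights (X_ij)_{i<j<n} in a network
  of n nodes: P(X_ij \<le> x i j for all i < j < n), obtained by mixing over the i.i.d.
  community labels and using conditional independence of the edge weights.\<close>
definition edge_joint_cdf ::
  "nat \<Rightarrow> (nat \<Rightarrow> real) \<Rightarrow> (nat \<Rightarrow> nat \<Rightarrow> real \<Rightarrow> real) \<Rightarrow> nat \<Rightarrow> (nat \<Rightarrow> nat \<Rightarrow> real) \<Rightarrow> real" where
  "edge_joint_cdf r p F n x =
     (\<Sum>Z \<in> Pi\<^sub>E {..<n} (\<lambda>_. {1..r}).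
        (\<Prod>i<n. p (Z i)) * (\<Prod>(i,j) \<in> {(i,j). i < j \<and> j < n}. F (Z i) (Z j) (x i j)))"

end

theory Submission
  imports Defs
begin

(* Sending the thresholds of all but a few edges to +infinity marginalises those edges out.
   Observe only the edge between nodes 0 and 1 (at threshold x) and edges joining further nodes
   to one of these two hubs (at thresholds a_k for hub 0, b_l for hub 1). Given the hub labels
   z0, z1 the leaves are independent, so the limit is
     sum_{z0,z1} p_z0 p_z1 F_{z0,z1}(x) prod_k F_z0(a_k) prod_l F_z1(b_l),
   and without leaves at hub 1 summing out z1 leaves sum_z p_z prod_k F_z(a_k).
   These are the product moments of finite mixtures of point masses at the functions F_z,
   resp. at the pairs (F_z0, F_z1), and such a mixture is determined by its moments: for a
   finite set S of functions and f in S, pick for each g in S - {f} a point t_g with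
   g(t_g) ~= f(t_g); then prod_g (h(t_g) - g(t_g)) is a polynomial in evaluations of h that
   vanishes on S - {f} but not at f. This identifies the atoms F_z with their weights p_z, and
   then the weights p_z0 p_z1 F_{z0,z1}(x). Only the distinctness of F_1, ..., F_r is used,
   not their linear independence. *)

lemma mixture_moments_prod_diff:
  fixes u :: "'i \<Rightarrow> 'x \<Rightarrow> real" and u' :: "'j \<Rightarrow> 'x \<Rightarrow> real"
  assumes moments: "\<And>cs. (\<Sum>i\<in>I. w i * (\<Prod>c\<leftarrow>cs. u i c)) = (\<Sum>i\<in>I'. w' i * (\<Prod>c\<leftarrow>cs. u' i c))"
    and "finite K"
  shows "(\<Sum>i\<in>I. w i * (\<Prod>k\<in>K. u i (t k) - s k)) = (\<Sum>i\<in>I'. w' i * (\<Prod>k\<in>K. u' i (t k) - s k))"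
proof -
  have "(\<Sum>i\<in>I. w i * ((\<Prod>c\<leftarrow>cs. u i c) * (\<Prod>k\<in>K. u i (t k) - s k)))
      = (\<Sum>i\<in>I'. w' i * ((\<Prod>c\<leftarrow>cs. u' i c) * (\<Prod>k\<in>K. u' i (t k) - s k)))" for cs
    using \<open>finite K\<close>
  proof (induction K arbitrary: cs rule: finite_induct)
    case empty
    show ?case using moments by simp
  next
    case (insert k K)
    have split: "W * ((\<Prod>c\<leftarrow>cs. v c) * (\<Prod>k'\<in>insert k K. v (t k') - s k'))
        = W * ((\<Prod>c\<leftarrow>t k # cs. v c) * (\<Prod>k'\<in>K. v (t k') - s k'))
          - s k * (W * ((\<Prod>c\<leftarrow>cs. v c) * (\<Prod>k'\<in>K. v (t k') - s k')))" for W and v :: "'x \<Rightarrow> real"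
      using insert.hyps by (simp add: algebra_simps)
    show ?case
      unfolding split by (simp only: sum_subtractf sum_distrib_left[symmetric] insert.IH)
  qed
  from this[of "[]"] show ?thesis by simp
qed

lemma separating_product:
  fixes S :: "('x \<Rightarrow> real) set"
  assumes "finite S"
  obtains t s where "(\<Prod>g\<in>S - {f}. f (t g) - s g) \<noteq> 0"
    and "\<And>h. h \<in> S - {f} \<Longrightarrow> (\<Prod>g\<in>S - {f}. h (t g) - s g) = 0"
proof
  define t where "t g = (SOME x. f x \<noteq> g x)" for g :: "'x \<Rightarrow> real"
  have differs: "f (t g) \<noteq> g (t g)" if "g \<noteq> f" for g
    unfolding t_def by (rule someI_ex) (use that in \<open>metis ext\<close>)
  show "(\<Prod>g\<in>S - {f}. f (t g) - g (t g)) \<noteq> 0"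
    using assms differs by simp
  show "(\<Prod>g\<in>S - {f}. h (t g) - g (t g)) = 0" if "h \<in> S - {f}" for h
    using assms that by auto
qed

lemma mixture_weights_eq:
  fixes u :: "'i \<Rightarrow> 'x \<Rightarrow> real" and u' :: "'j \<Rightarrow> 'x \<Rightarrow> real"
  assumes "finite I" "finite I'"
    and moments: "\<And>cs. (\<Sum>i\<in>I. w i * (\<Prod>c\<leftarrow>cs. u i c)) = (\<Sum>i\<in>I'. w' i * (\<Prod>c\<leftarrow>cs. u' i c))"
  shows "(\<Sum>i\<in>{i\<in>I. u i = f}. w i) = (\<Sum>i\<in>{i\<in>I'. u' i = f}. w' i)"
proof -
  define S where "S = u ` I \<union> u' ` I'"
  have "finite S" using assms by (simp add: S_def)
  obtain t s where nonzero: "(\<Prod>g\<in>S - {f}. f (t g) - s g) \<noteq> 0"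
    and vanish: "\<And>h. h \<in> S - {f} \<Longrightarrow> (\<Prod>g\<in>S - {f}. h (t g) - s g) = 0"
    using separating_product[OF \<open>finite S\<close>, of f] by blast
  define \<phi> where "\<phi> h = (\<Prod>g\<in>S - {f}. h (t g) - s g)" for h
  have "(\<Sum>i\<in>{i\<in>I. u i = f}. w i) * \<phi> f = (\<Sum>i\<in>I. w i * \<phi> (u i))"
    using \<open>finite I\<close> vanish unfolding sum_distrib_right sum.inter_filter[OF \<open>finite I\<close>]
    by (intro sum.cong) (auto simp: \<phi>_def S_def)
  also have "\<dots> = (\<Sum>i\<in>I'. w' i * \<phi> (u' i))"
    unfolding \<phi>_def using \<open>finite S\<close> by (intro mixture_moments_prod_diff moments) simp
  also have "\<dots> = (\<Sum>i\<in>{i\<in>I'. u' i = f}. w' i) * \<phi> f"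
    using \<open>finite I'\<close> vanish unfolding sum_distrib_right sum.inter_filter[OF \<open>finite I'\<close>]
    by (intro sum.cong) (auto simp: \<phi>_def S_def)
  finally show ?thesis
    using nonzero by (simp add: \<phi>_def)
qed

lemma mixture_atom_in_image:
  fixes u :: "'i \<Rightarrow> 'x \<Rightarrow> real" and u' :: "'j \<Rightarrow> 'x \<Rightarrow> real"
  assumes "finite I" "finite I'"
    and moments: "\<And>cs. (\<Sum>i\<in>I. w i * (\<Prod>c\<leftarrow>cs. u i c)) = (\<Sum>i\<in>I'. w' i * (\<Prod>c\<leftarrow>cs. u' i c))"
    and "inj_on u I" "i \<in> I" "w i \<noteq> 0"
  shows "u i \<in> u' ` I'"
proof (rule ccontr)
  assume "u i \<notin> u' ` I'"
  then have "{j\<in>I'. u' j = u i} = {}" by force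
  moreover have "{i'\<in>I. u i' = u i} = {i}"
    using \<open>inj_on u I\<close> \<open>i \<in> I\<close> by (auto dest: inj_onD)
  ultimately have "w i = 0"
    using mixture_weights_eq[OF assms(1-3), of "u i"] by (simp only:) simp
  with \<open>w i \<noteq> 0\<close> show False ..
qed

lemma mixture_atom_weight_eq:
  fixes u :: "'i \<Rightarrow> 'x \<Rightarrow> real" and u' :: "'j \<Rightarrow> 'x \<Rightarrow> real"
  assumes "finite I" "finite I'"
    and moments: "\<And>cs. (\<Sum>i\<in>I. w i * (\<Prod>c\<leftarrow>cs. u i c)) = (\<Sum>i\<in>I'. w' i * (\<Prod>c\<leftarrow>cs. u' i c))"
    and "inj_on u I" "inj_on u' I'" "i \<in> I" "j \<in> I'" "u' j = u i"
  shows "w' j = w i"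
proof -
  have "{i'\<in>I. u i' = u i} = {i}"
    using \<open>inj_on u I\<close> \<open>i \<in> I\<close> by (auto dest: inj_onD)
  moreover have "{j'\<in>I'. u' j' = u i} = {j}"
    unfolding \<open>u' j = u i\<close>[symmetric] using \<open>inj_on u' I'\<close> \<open>j \<in> I'\<close> by (auto dest: inj_onD)
  ultimately show ?thesis
    using mixture_weights_eq[OF assms(1-3), of "u i"] by simp
qed

lemma sum_PiE_insert:
  assumes "x \<notin> S"
  shows "(\<Sum>Z\<in>Pi\<^sub>E (insert x S) T. f Z) = (\<Sum>y\<in>T x. \<Sum>Z\<in>Pi\<^sub>E S T. f (Z(x := y)))"
proof -
  have "(\<Sum>Z\<in>Pi\<^sub>E (insert x S) T. f Z) = (\<Sum>(y, Z)\<in>T x \<times> Pi\<^sub>E S T. f (Z(x := y)))"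
    unfolding PiE_insert_eq
    by (subst sum.reindex[OF inj_combinator[OF assms]]) (simp add: case_prod_beta)
  then show ?thesis by (simp add: sum.cartesian_product)
qed

lemma sum_PiE_two_hubs:
  fixes p :: "'a \<Rightarrow> 'b::comm_semiring_1" and n :: nat
  assumes "finite T" "2 \<le> n"
  shows "(\<Sum>Z\<in>Pi\<^sub>E {..<n} (\<lambda>_. T).
            (\<Prod>i<n. p (Z i)) * (h (Z 0) (Z 1) * (\<Prod>j\<in>{2..<n}. g j (Z 0) (Z 1) (Z j))))
       = (\<Sum>z0\<in>T. \<Sum>z1\<in>T. p z0 * p z1 * h z0 z1 * (\<Prod>j\<in>{2..<n}. \<Sum>z\<in>T. p z * g j z0 z1 z))"
proof -
  let ?L = "{2..<n}"
  have nodes: "{..<n} = insert 0 (insert 1 ?L)"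
    using assms(2) by auto
  have "(\<Sum>Z\<in>Pi\<^sub>E {..<n} (\<lambda>_. T). f Z)
      = (\<Sum>z0\<in>T. \<Sum>z1\<in>T. \<Sum>W\<in>Pi\<^sub>E ?L (\<lambda>_. T). f (W(1 := z1, 0 := z0)))"
    for f :: "(nat \<Rightarrow> 'a) \<Rightarrow> 'b"
    unfolding nodes by (simp add: sum_PiE_insert)
  moreover have "(\<Prod>i<n. p (Z i)) * (h (Z 0) (Z 1) * (\<Prod>j\<in>?L. g j (Z 0) (Z 1) (Z j)))
      = p z0 * p z1 * h z0 z1 * (\<Prod>j\<in>?L. p (W j) * g j z0 z1 (W j))"
    if "Z = W(1 := z1, 0 := z0)" for Z W z0 z1
    unfolding nodes using that by (simp add: prod.distrib mult_ac)
  ultimately show ?thesis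
    using assms(1) by (simp add: prod_sum_PiE sum_distrib_left)
qed

lemma prod_pairs_less:
  fixes g :: "nat \<Rightarrow> nat \<Rightarrow> 'a::comm_monoid_mult"
  shows "(\<Prod>(i, j)\<in>{(i, j). i < j \<and> j < n}. g i j) = (\<Prod>j<n. \<Prod>i<j. g i j)"
proof -
  have "{(i, j). i < j \<and> j < n} = prod.swap ` (SIGMA j:{..<n}. {..<j})"
    by auto
  then have "(\<Prod>(i, j)\<in>{(i, j). i < j \<and> j < n}. g i j)
      = (\<Prod>(j, i)\<in>(SIGMA j:{..<n}. {..<j}). g i j)"
    by (simp add: prod.reindex case_prod_beta)
  also have "\<dots> = (\<Prod>j<n. \<Prod>i<j. g i j)"
    by (rule prod.Sigma[symmetric]) auto
  finally show ?thesis .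
qed

lemma tendsto_edge_joint_cdf_marginal:
  assumes "wsbm r p F"
  shows "((\<lambda>t. edge_joint_cdf r p F n (\<lambda>i j. case y i j of None \<Rightarrow> t | Some v \<Rightarrow> v)) \<longlongrightarrow>
           (\<Sum>Z\<in>Pi\<^sub>E {..<n} (\<lambda>_. {1..r}). (\<Prod>i<n. p (Z i)) *
              (\<Prod>(i, j)\<in>{(i, j). i < j \<and> j < n}.
                 case y i j of None \<Rightarrow> 1 | Some v \<Rightarrow> F (Z i) (Z j) v)))
         at_top"
  unfolding edge_joint_cdf_def
proof (intro tendsto_sum tendsto_mult tendsto_const tendsto_prod)
  fix Z q
  assume Z: "Z \<in> Pi\<^sub>E {..<n} (\<lambda>_. {1..r})" and "q \<in> {(i, j). i < j \<and> j < n}"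
  then obtain i j where q: "q = (i, j)" and "i < n" "j < n"
    by auto
  with Z have cdf: "is_cdf (F (Z i) (Z j))"
    using assms by (simp add: wsbm_def PiE_iff)
  show "((\<lambda>t. case q of (i, j) \<Rightarrow> F (Z i) (Z j) (case y i j of None \<Rightarrow> t | Some v \<Rightarrow> v)) \<longlongrightarrow>
          (case q of (i, j) \<Rightarrow> case y i j of None \<Rightarrow> 1 | Some v \<Rightarrow> F (Z i) (Z j) v)) at_top"
    using cdf unfolding q is_cdf_def by (cases "y i j") simp_all
qed

(* None stands for the threshold +infinity, i.e. the edge is marginalised out. Node j >= 2 is a
   leaf attached to hub 0 if cs ! (j - 2) is Inl, and to hub 1 if it is Inr. *)
definition two_hub_thresholds :: "real \<Rightarrow> (real + real) list \<Rightarrow> nat \<Rightarrow> nat \<Rightarrow> real option" where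
  "two_hub_thresholds x cs i j =
     (if i = 0 \<and> j = 1 then Some x
      else if 2 \<le> j then
        (case cs ! (j - 2) of
           Inl a \<Rightarrow> if i = 0 then Some a else None
         | Inr b \<Rightarrow> if i = 1 then Some b else None)
      else None)"

lemma prod_two_hub_thresholds:
  "(\<Prod>(i, j)\<in>{(i, j). i < j \<and> j < length cs + 2}.
       case two_hub_thresholds x cs i j of None \<Rightarrow> 1 | Some v \<Rightarrow> F (Z i) (Z j) v)
   = F (Z 0) (Z 1) x *
     (\<Prod>j\<in>{2..<length cs + 2}.
        case cs ! (j - 2) of Inl a \<Rightarrow> F (Z 0) (Z j) a | Inr b \<Rightarrow> F (Z 1) (Z j) b)"
proof -
  define col where
    "col j = (\<Prod>i<j. case two_hub_thresholds x cs i j of None \<Rightarrow> 1 | Some v \<Rightarrow> F (Z i) (Z j) v)" for j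
  have "col 0 = 1" "col 1 = F (Z 0) (Z 1) x"
    by (simp_all add: col_def two_hub_thresholds_def)
  moreover have "col j = (case cs ! (j - 2) of Inl a \<Rightarrow> F (Z 0) (Z j) a | Inr b \<Rightarrow> F (Z 1) (Z j) b)"
    if "2 \<le> j" for j
    using that by (cases "cs ! (j - 2)")
      (simp_all add: col_def two_hub_thresholds_def if_distrib[of "case_option _ _"] cong: if_cong)
  moreover have "{..<length cs + 2} = {0, 1} \<union> {2..<length cs + 2}"
    by auto
  ultimately show ?thesis
    unfolding prod_pairs_less col_def[symmetric] by (simp add: prod.union_disjoint)
qed

lemma prod_list_map_conv_prod_shift:
  "(\<Prod>c\<leftarrow>cs. f c) = (\<Prod>j\<in>{k..<length cs + k}. f (cs ! (j - k)))"
proof -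
  have "(\<Prod>c\<leftarrow>cs. f c) = (\<Prod>i\<in>{0..<length cs}. f (cs ! i))"
    by (simp add: prod.list_conv_set_nth)
  also have "\<dots> = (\<Prod>j\<in>{0 + k..<length cs + k}. f (cs ! (j - k)))"
    by (subst prod.shift_bounds_nat_ivl) simp
  finally show ?thesis by simp
qed

lemma tendsto_edge_joint_cdf_two_hubs:
  assumes "wsbm r p F"
  shows "((\<lambda>t. edge_joint_cdf r p F (length cs + 2)
             (\<lambda>i j. case two_hub_thresholds x cs i j of None \<Rightarrow> t | Some v \<Rightarrow> v)) \<longlongrightarrow>
           (\<Sum>(z0, z1)\<in>{1..r} \<times> {1..r}. p z0 * p z1 * F z0 z1 x *
              (\<Prod>c\<leftarrow>cs. case_sum (marg_cdf r p F z0) (marg_cdf r p F z1) c)))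
         at_top"
proof -
  let ?n = "length cs + 2"
  have leaf: "(\<Sum>z\<in>{1..r}. p z * (case c of Inl a \<Rightarrow> F z0 z a | Inr b \<Rightarrow> F z1 z b))
      = case_sum (marg_cdf r p F z0) (marg_cdf r p F z1) c" for c z0 z1
    by (cases c) (simp_all add: marg_cdf_def mult.commute)
  have "(\<Sum>Z\<in>Pi\<^sub>E {..<?n} (\<lambda>_. {1..r}). (\<Prod>i<?n. p (Z i)) *
            (\<Prod>(i, j)\<in>{(i, j). i < j \<and> j < ?n}.
               case two_hub_thresholds x cs i j of None \<Rightarrow> 1 | Some v \<Rightarrow> F (Z i) (Z j) v))
      = (\<Sum>z0\<in>{1..r}. \<Sum>z1\<in>{1..r}. p z0 * p z1 * F z0 z1 x * (\<Prod>j\<in>{2..<?n}.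
            \<Sum>z\<in>{1..r}. p z * (case cs ! (j - 2) of Inl a \<Rightarrow> F z0 z a | Inr b \<Rightarrow> F z1 z b)))"
    unfolding prod_two_hub_thresholds by (rule sum_PiE_two_hubs) simp_all
  also have "\<dots> = (\<Sum>(z0, z1)\<in>{1..r} \<times> {1..r}. p z0 * p z1 * F z0 z1 x *
              (\<Prod>c\<leftarrow>cs. case_sum (marg_cdf r p F z0) (marg_cdf r p F z1) c))"
    unfolding leaf prod_list_map_conv_prod_shift[where k = 2] by (simp add: sum.cartesian_product)
  finally show ?thesis
    using tendsto_edge_joint_cdf_marginal[OF assms, of ?n "two_hub_thresholds x cs"] by simp
qed

lemma two_hub_moments_eq:
  assumes "wsbm r p F" "wsbm r' p' F'"
    and "\<forall>n x. edge_joint_cdf r p F n x = edge_joint_cdf r' p' F' n x"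
  shows "(\<Sum>(z0, z1)\<in>{1..r} \<times> {1..r}. p z0 * p z1 * F z0 z1 x *
            (\<Prod>c\<leftarrow>cs. case_sum (marg_cdf r p F z0) (marg_cdf r p F z1) c))
       = (\<Sum>(z0, z1)\<in>{1..r'} \<times> {1..r'}. p' z0 * p' z1 * F' z0 z1 x *
            (\<Prod>c\<leftarrow>cs. case_sum (marg_cdf r' p' F' z0) (marg_cdf r' p' F' z1) c))"
  using tendsto_edge_joint_cdf_two_hubs[OF assms(1)] tendsto_edge_joint_cdf_two_hubs[OF assms(2)]
  unfolding assms(3)[rule_format] by (rule tendsto_unique[OF trivial_limit_at_top_linorder])

lemma marg_cdf_moments_eq:
  assumes "wsbm r p F" "wsbm r' p' F'"
    and "\<forall>n x. edge_joint_cdf r p F n x = edge_joint_cdf r' p' F' n x"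
  shows "(\<Sum>z\<in>{1..r}. p z * (\<Prod>a\<leftarrow>as. marg_cdf r p F z a))
       = (\<Sum>z\<in>{1..r'}. p' z * (\<Prod>a\<leftarrow>as. marg_cdf r' p' F' z a))"
proof (cases as)
  case Nil
  then show ?thesis
    using assms(1,2) by (simp add: wsbm_def)
next
  case (Cons x as')
  have hub0_only: "(\<Sum>(z0, z1)\<in>{1..s} \<times> {1..s}. q z0 * q z1 * H z0 z1 x *
            (\<Prod>c\<leftarrow>map Inl as'. case_sum (marg_cdf s q H z0) (marg_cdf s q H z1) c))
      = (\<Sum>z\<in>{1..s}. q z * (\<Prod>a\<leftarrow>x # as'. marg_cdf s q H z a))" for s q H
    by (simp add: sum.cartesian_product[symmetric] marg_cdf_def sum_distrib_left sum_distrib_right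
        mult_ac o_def)
  show ?thesis
    using two_hub_moments_eq[OF assms, of x "map Inl as'"] unfolding hub0_only Cons .
qed

lemma lin_indep_funs_imp_inj_on:
  assumes "lin_indep_funs r G"
  shows "inj_on G {1..r}"
proof (rule inj_onI, rule ccontr)
  fix a b
  assume ab: "a \<in> {1..r}" "b \<in> {1..r}" "G a = G b" "a \<noteq> b"
  define c where "c z = (if z = a then 1 else if z = b then -1 else 0 :: real)" for z
  have "(\<Sum>z=1..r. c z * G z x) = 0" for x
  proof -
    have "(\<Sum>z=1..r. c z * G z x)
        = (\<Sum>z=1..r. (if z = a then G a x else 0) - (if z = b then G b x else 0))"
      by (rule sum.cong) (use ab in \<open>auto simp: c_def\<close>)
    also have "\<dots> = 0"
      using ab by (simp add: sum_subtractf)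
    finally show ?thesis .
  qed
  then have "c a = 0"
    using assms ab unfolding lin_indep_funs_def by blast
  then show False
    by (simp add: c_def)
qed

lemma inj_on_case_sum_pairs:
  assumes "inj_on g A"
  shows "inj_on (\<lambda>(a, b). case_sum (g a) (g b)) (A \<times> A)"
proof (rule inj_onI, clarify)
  fix a b a' b'
  assume "a \<in> A" "b \<in> A" "a' \<in> A" "b' \<in> A" and eq: "case_sum (g a) (g b) = case_sum (g a') (g b')"
  have "g a = g a'" "g b = g b'"
    using fun_cong[OF eq, of "Inl t" for t] fun_cong[OF eq, of "Inr t" for t] by auto
  then show "a = a' \<and> b = b'"
    using assms \<open>a \<in> A\<close> \<open>b \<in> A\<close> \<open>a' \<in> A\<close> \<open>b' \<in> A\<close> by (auto dest: inj_onD)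
qed

lemma wsbm_community_matching:
  assumes w: "wsbm r p F" "wsbm r' p' F'"
    and inj: "inj_on (marg_cdf r p F) {1..r}" "inj_on (marg_cdf r' p' F') {1..r'}"
    and eq: "\<forall>n x. edge_joint_cdf r p F n x = edge_joint_cdf r' p' F' n x"
  obtains \<sigma> where "bij_betw \<sigma> {1..r} {1..r'}"
    and "\<And>z. z \<in> {1..r} \<Longrightarrow> marg_cdf r' p' F' (\<sigma> z) = marg_cdf r p F z"
    and "\<And>z. z \<in> {1..r} \<Longrightarrow> p' (\<sigma> z) = p z"
proof -
  define G G' where "G = marg_cdf r p F" and "G' = marg_cdf r' p' F'"
  note moments = marg_cdf_moments_eq[OF w eq, folded G_def G'_def]
  have pos: "p z \<noteq> 0" if "z \<in> {1..r}" for z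
    using w(1) that unfolding wsbm_def by (metis less_irrefl)
  have pos': "p' z \<noteq> 0" if "z \<in> {1..r'}" for z
    using w(2) that unfolding wsbm_def by (metis less_irrefl)
  have image: "G ` {1..r} = G' ` {1..r'}"
  proof
    show "G ` {1..r} \<subseteq> G' ` {1..r'}"
      using mixture_atom_in_image[OF _ _ moments inj(1)[folded G_def]] pos by auto
    show "G' ` {1..r'} \<subseteq> G ` {1..r}"
      using mixture_atom_in_image[OF _ _ moments[symmetric] inj(2)[folded G'_def]] pos' by auto
  qed
  define \<sigma> where "\<sigma> = inv_into {1..r'} G' \<circ> G"
  have bij: "bij_betw \<sigma> {1..r} {1..r'}"
    unfolding \<sigma>_def using inj image
    by (metis G_def G'_def bij_betw_inv_into bij_betw_trans inj_on_imp_bij_betw)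
  moreover have G'\<sigma>: "G' (\<sigma> z) = G z" if "z \<in> {1..r}" for z
    unfolding \<sigma>_def using image that by (metis comp_apply f_inv_into_f imageI)
  moreover have "p' (\<sigma> z) = p z" if "z \<in> {1..r}" for z
    using mixture_atom_weight_eq[OF _ _ moments inj[folded G_def G'_def] that
        bij_betw_apply[OF bij that] G'\<sigma>[OF that]] by simp
  ultimately show ?thesis
    using that unfolding G_def G'_def by blast
qed

lemma wsbm_relabeled_cdf_eq:
  assumes w: "wsbm r p F" "wsbm r' p' F'"
    and inj: "inj_on (marg_cdf r p F) {1..r}" "inj_on (marg_cdf r' p' F') {1..r'}"
    and eq: "\<forall>n x. edge_joint_cdf r p F n x = edge_joint_cdf r' p' F' n x"
    and \<sigma>: "\<And>z. z \<in> {1..r} \<Longrightarrow> \<sigma> z \<in> {1..r'}"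
      "\<And>z. z \<in> {1..r} \<Longrightarrow> marg_cdf r' p' F' (\<sigma> z) = marg_cdf r p F z"
      "\<And>z. z \<in> {1..r} \<Longrightarrow> p' (\<sigma> z) = p z"
    and ab: "a \<in> {1..r}" "b \<in> {1..r}"
  shows "F' (\<sigma> a) (\<sigma> b) x = F a b x"
proof -
  define w w' where "w = (\<lambda>(z0, z1). p z0 * p z1 * F z0 z1 x)"
    and "w' = (\<lambda>(z0, z1). p' z0 * p' z1 * F' z0 z1 x)"
  define G G' where "G = marg_cdf r p F" and "G' = marg_cdf r' p' F'"
  define u u' where "u = (\<lambda>(z0, z1). case_sum (G z0) (G z1))"
    and "u' = (\<lambda>(z0, z1). case_sum (G' z0) (G' z1))"
  have moments: "(\<Sum>q\<in>{1..r} \<times> {1..r}. w q * (\<Prod>c\<leftarrow>cs. u q c))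
      = (\<Sum>q\<in>{1..r'} \<times> {1..r'}. w' q * (\<Prod>c\<leftarrow>cs. u' q c))" for cs
    using two_hub_moments_eq[OF w eq, of x cs]
    unfolding w_def w'_def u_def u'_def G_def G'_def by (simp add: case_prod_unfold)
  have "w' (\<sigma> a, \<sigma> b) = w (a, b)"
    by (rule mixture_atom_weight_eq[OF _ _ moments])
      (use inj_on_case_sum_pairs inj \<sigma> ab in \<open>auto simp: u_def u'_def G_def G'_def\<close>)
  moreover have "p a > 0" "p b > 0"
    using w(1) ab by (auto simp: wsbm_def)
  ultimately show ?thesis
    using \<sigma>(3) ab by (simp add: w_def w'_def)
qed

theorem proposition1:
  fixes r r' :: nat and p p' :: "nat \<Rightarrow> real" and F F' :: "nat \<Rightarrow> nat \<Rightarrow> real \<Rightarrow> real"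
  assumes "wsbm r p F" and "wsbm r' p' F'"
    and "lin_indep_funs r (marg_cdf r p F)"
    and "lin_indep_funs r' (marg_cdf r' p' F')"
    and "\<forall>n x. edge_joint_cdf r p F n x = edge_joint_cdf r' p' F' n x"
  shows "r = r' \<and> (\<exists>\<sigma>. bij_betw \<sigma> {1..r} {1..r}
            \<and> (\<forall>z\<in>{1..r}. p' (\<sigma> z) = p z)
            \<and> (\<forall>z1\<in>{1..r}. \<forall>z2\<in>{1..r}. F' (\<sigma> z1) (\<sigma> z2) = F z1 z2))"
proof -
  have inj: "inj_on (marg_cdf r p F) {1..r}" "inj_on (marg_cdf r' p' F') {1..r'}"
    using assms(3,4) by (blast intro: lin_indep_funs_imp_inj_on)+
  obtain \<sigma> where bij: "bij_betw \<sigma> {1..r} {1..r'}"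
    and G: "\<And>z. z \<in> {1..r} \<Longrightarrow> marg_cdf r' p' F' (\<sigma> z) = marg_cdf r p F z"
    and p: "\<And>z. z \<in> {1..r} \<Longrightarrow> p' (\<sigma> z) = p z"
    using wsbm_community_matching[OF assms(1,2) inj assms(5)] by blast
  have "r = r'"
    using bij_betw_same_card[OF bij] by simp
  moreover have "F' (\<sigma> z1) (\<sigma> z2) = F z1 z2" if "z1 \<in> {1..r}" "z2 \<in> {1..r}" for z1 z2
    using wsbm_relabeled_cdf_eq[OF assms(1,2) inj assms(5) bij_betw_apply[OF bij] G p that]
    by (simp add: fun_eq_iff)
  ultimately show ?thesis
    using bij p by auto
qed

end
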